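(* Let $\mathcal G=G(n;S)$ be an integral circulant graph on $n$ vertices with symbol $S$. Then $\mathcal G$ is bipartite if and only if $n$ is even and $S=\bigcup_{f\in F}G_n(n/f)$ for a set $F$ of divisors of $n$ such that, for some integer $\ell_0$, every element of the set $\{2\ell_0/f : f\in F\}$ is an odd integer.
   Context: For an integer $n$ and a set $S\subseteq\{1,\dots,n-1\}$ such that $s\in S$ if and only if $n-s\in S$, the circulant graph $G(n;S)$ is the undirected graph on vertex set $\mathbb{Z}_n$ in which $i$ and $j$ are adjacent iff $i-j \bmod n\in S$. A graph is integral if all eigenvalues of its adjacency matrix are integers. For a divisor $d$ of $n$, $G_n(d)=\{k : 1\le k\le n-1,\ \gcd(k,n)=d\}$. *)

theory Defs
  imports "Jordan_Normal_Form.Char_Poly"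
begin

text \<open>Vertex set of G(n;S) is Z_n, represented by {0..<n}; i and j adjacent iff (i - j) mod n \<in> S.\<close>

definition circ_adj :: "nat \<Rightarrow> nat set \<Rightarrow> nat \<Rightarrow> nat \<Rightarrow> bool" where
  "circ_adj n S i j \<longleftrightarrow> (i + n - j) mod n \<in> S"

definition circ_adj_matrix :: "nat \<Rightarrow> nat set \<Rightarrow> complex mat" where
  "circ_adj_matrix n S = mat n n (\<lambda>(i, j). if circ_adj n S i j then 1 else 0)"

definition valid_symbol :: "nat \<Rightarrow> nat set \<Rightarrow> bool" where
  "valid_symbol n S \<longleftrightarrow> S \<subseteq> {1..n-1} \<and> (\<forall>s. s \<in> S \<longleftrightarrow> (s \<in> {1..n-1} \<and> n - s \<in> S))"

definition integral_circulant :: "nat \<Rightarrow> nat set \<Rightarrow> bool" where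
  "integral_circulant n S \<longleftrightarrow> (\<forall>ev. eigenvalue (circ_adj_matrix n S) ev \<longrightarrow> ev \<in> \<int>)"

definition circ_bipartite :: "nat \<Rightarrow> nat set \<Rightarrow> bool" where
  "circ_bipartite n S \<longleftrightarrow> (\<exists>c :: nat \<Rightarrow> bool. \<forall>i<n. \<forall>j<n. circ_adj n S i j \<longrightarrow> c i \<noteq> c j)"

definition Gn :: "nat \<Rightarrow> nat \<Rightarrow> nat set" where
  "Gn n d = {k. 1 \<le> k \<and> k \<le> n - 1 \<and> gcd k n = d}"

end

(*
  The eigenvalues of G(n;S) are lambda_j = sum_{s in S} omega^(j s), omega = exp(2 pi i/n).
  If they are all integers, S is closed under multiplication by primes q not dividing n:
  in Z[omega] the Frobenius congruence lambda_j^q == lambda_(qj) (mod q) together with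
  Fermat gives lambda_j == lambda_(qj) (mod q), and Fourier inversion at k = q s mod n
  turns a failure of closure into q | n.  Closure under all units mod n then makes S a union of
  gcd-classes G_n(d).

  G(n;S) is bipartite iff all s in S have the same 2-adic valuation t and 2^(t+1) | n:
  colour i by its t-th binary digit; conversely, a s1 + b s2 = 0 mod n is a closed walk of
  length a + b, which must be even.  For S a union of classes G_n(n/f), f in F, this
  valuation condition says exactly that all 2 l0/f are odd.
*)
theory Submission
  imports Defs "HOL-Number_Theory.Residues"
begin

definition root_unity :: "nat \<Rightarrow> complex" where
  "root_unity n = cis (2 * pi / real n)"

lemma root_unity_power: "root_unity n ^ m = cis (2 * pi * real m / real n)"
  by (simp add: root_unity_def DeMoivre mult_ac)

lemma root_unity_power_eq_1_iff:
  assumes "n > 0"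
  shows "root_unity n ^ m = 1 \<longleftrightarrow> n dvd m"
proof
  assume "root_unity n ^ m = 1"
  then have "cos (2 * pi * real m / real n) = 1"
    by (simp add: root_unity_power complex_eq_iff)
  then obtain k :: int where "2 * pi * real m / real n = real_of_int k * 2 * pi"
    by (auto simp: cos_one_2pi_int)
  then have "real_of_int (int m) = real_of_int (k * int n)"
    using assms by (simp add: field_simps)
  then have "int m = k * int n"
    by (simp only: of_int_eq_iff)
  then show "n dvd m"
    by (metis dvd_triv_right int_dvd_int_iff)
next
  assume "n dvd m"
  then obtain k where "m = n * k" ..
  moreover have "root_unity n ^ n = 1"
    using assms by (simp add: root_unity_power)
  ultimately show "root_unity n ^ m = 1"
    by (simp add: power_mult)
qed

lemma root_unity_power_cong:
  assumes "n > 0" and "[a = b] (mod n)"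
  shows "root_unity n ^ a = root_unity n ^ b"
proof -
  have "root_unity n ^ n = 1"
    using root_unity_power_eq_1_iff[OF assms(1), of n] by simp
  have mod: "root_unity n ^ m = root_unity n ^ (m mod n)" for m
  proof -
    have "root_unity n ^ m = root_unity n ^ (n * (m div n) + m mod n)"
      by simp
    also have "\<dots> = (root_unity n ^ n) ^ (m div n) * root_unity n ^ (m mod n)"
      by (simp only: power_add power_mult)
    finally show ?thesis
      using \<open>root_unity n ^ n = 1\<close> by simp
  qed
  show ?thesis
    using mod[of a] mod[of b] assms(2) by (simp add: cong_def)
qed

lemma sum_root_unity_powers:
  assumes "n > 0"
  shows "(\<Sum>j<n. root_unity n ^ (j * m)) = (if n dvd m then of_nat n else 0)"
proof (cases "n dvd m")
  case True
  then have "root_unity n ^ (j * m) = 1" for j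
    using root_unity_power_eq_1_iff[OF assms] by (simp add: power_mult[symmetric] mult.commute)
  then show ?thesis
    using True by simp
next
  case False
  define z where "z = root_unity n ^ m"
  have "z \<noteq> 1" and "z ^ n = 1"
    using False root_unity_power_eq_1_iff[OF assms]
    by (simp_all add: z_def power_mult[symmetric] mult.commute)
  have "(\<Sum>j<n. root_unity n ^ (j * m)) = (\<Sum>j<n. z ^ j)"
    by (simp add: z_def power_mult[symmetric] mult.commute)
  also have "\<dots> = 0"
    using \<open>z \<noteq> 1\<close> \<open>z ^ n = 1\<close> by (simp add: sum_gp_strict)
  finally show ?thesis
    using False by simp
qed

lemma dvd_add_diff_iff_mod_eq:
  fixes x k n :: nat
  assumes "k < n"
  shows "n dvd x + n - k \<longleftrightarrow> x mod n = k"
proof -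
  have "n dvd x + n - k \<longleftrightarrow> [x + (n - k) = k + (n - k)] (mod n)"
    using assms by (simp add: cong_0_iff[symmetric] cong_def)
  also have "\<dots> \<longleftrightarrow> x mod n = k"
    unfolding cong_add_rcancel_nat using assms by (simp add: cong_def)
  finally show ?thesis .
qed

lemma root_unity_inversion:
  assumes "n > 0" and "finite T" and "k < n"
  shows "(\<Sum>j<n. (\<Sum>s\<in>T. root_unity n ^ (j * e s)) * root_unity n ^ (j * (n - k)))
       = of_nat n * of_nat (card {s\<in>T. e s mod n = k})"
proof -
  have "(\<Sum>j<n. (\<Sum>s\<in>T. root_unity n ^ (j * e s)) * root_unity n ^ (j * (n - k)))
      = (\<Sum>s\<in>T. \<Sum>j<n. root_unity n ^ (j * (e s + (n - k))))"
    by (subst sum.swap) (simp add: sum_distrib_right power_add distrib_left)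
  also have "\<dots> = (\<Sum>s\<in>T. if e s mod n = k then of_nat n else 0)"
    using assms by (simp add: sum_root_unity_powers dvd_add_diff_iff_mod_eq)
  also have "\<dots> = of_nat n * of_nat (card {s\<in>T. e s mod n = k})"
    using assms(2) by (simp add: sum.inter_filter[symmetric] mult.commute)
  finally show ?thesis .
qed

inductive cyclotomic_int :: "nat \<Rightarrow> complex \<Rightarrow> bool" for n where
  of_int: "cyclotomic_int n (of_int c)"
| root_power: "cyclotomic_int n (root_unity n ^ m)"
| add: "cyclotomic_int n x \<Longrightarrow> cyclotomic_int n y \<Longrightarrow> cyclotomic_int n (x + y)"
| mult: "cyclotomic_int n x \<Longrightarrow> cyclotomic_int n y \<Longrightarrow> cyclotomic_int n (x * y)"

lemma cyclotomic_int_of_nat: "cyclotomic_int n (of_nat k)"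
  using cyclotomic_int.of_int[of n "int k"] by simp

lemma cyclotomic_int_diff:
  assumes "cyclotomic_int n x" and "cyclotomic_int n y"
  shows "cyclotomic_int n (x - y)"
proof -
  have "cyclotomic_int n (x + of_int (-1) * y)"
    using assms by (intro cyclotomic_int.intros)
  then show ?thesis
    by simp
qed

lemma cyclotomic_int_sum:
  "(\<And>a. a \<in> A \<Longrightarrow> cyclotomic_int n (f a)) \<Longrightarrow> cyclotomic_int n (\<Sum>a\<in>A. f a)"
  using cyclotomic_int.of_int[of n 0]
  by (induction A rule: infinite_finite_induct) (auto intro: cyclotomic_int.add)

lemma cyclotomic_int_power: "cyclotomic_int n x \<Longrightarrow> cyclotomic_int n (x ^ k)"
  using cyclotomic_int.of_int[of n 1]
  by (induction k) (auto intro: cyclotomic_int.mult)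

definition root_powers_vec :: "nat \<Rightarrow> complex vec" where
  "root_powers_vec n = vec n (\<lambda>i. root_unity n ^ i)"

lemma root_powers_vec_carrier [simp]: "root_powers_vec n \<in> carrier_vec n"
  by (simp add: root_powers_vec_def)

lemma root_powers_vec_nonzero: "n > 0 \<Longrightarrow> root_powers_vec n \<noteq> 0\<^sub>v n"
  by (metis index_vec index_zero_vec(1) power_0 root_powers_vec_def zero_neq_one)

lemma mult_mat_vec_root_powers:
  assumes "A \<in> carrier_mat n n" and "i < n"
  shows "(map_mat of_int A *\<^sub>v root_powers_vec n) $ i = (\<Sum>k<n. of_int (A $$ (i, k)) * root_unity n ^ k)"
  using assms
  by (simp add: root_powers_vec_def mult_mat_vec_def scalar_prod_def atLeast0LessThan)

definition cyclic_shift_mat :: "nat \<Rightarrow> nat \<Rightarrow> int \<Rightarrow> int mat" where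
  "cyclic_shift_mat n m c = mat n n (\<lambda>(i, k). if k = (i + m) mod n then c else 0)"

lemma cyclic_shift_mat_carrier [simp]: "cyclic_shift_mat n m c \<in> carrier_mat n n"
  by (simp add: cyclic_shift_mat_def)

lemma cyclic_shift_mat_root_powers:
  "map_mat of_int (cyclic_shift_mat n m c) *\<^sub>v root_powers_vec n
    = (of_int c * root_unity n ^ m) \<cdot>\<^sub>v root_powers_vec n"
proof (rule eq_vecI)
  fix i assume "i < dim_vec ((of_int c * root_unity n ^ m) \<cdot>\<^sub>v root_powers_vec n)"
  then have i: "i < n"
    by (simp add: root_powers_vec_def)
  then have "(map_mat of_int (cyclic_shift_mat n m c) *\<^sub>v root_powers_vec n) $ i
      = (\<Sum>k<n. of_int (cyclic_shift_mat n m c $$ (i, k)) * root_unity n ^ k)"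
    by (intro mult_mat_vec_root_powers) auto
  also have "\<dots> = (\<Sum>k<n. if k = (i + m) mod n then of_int c * root_unity n ^ k else 0)"
    using i by (intro sum.cong) (auto simp: cyclic_shift_mat_def)
  also have "\<dots> = of_int c * root_unity n ^ ((i + m) mod n)"
    using i by simp
  also have "root_unity n ^ ((i + m) mod n) = root_unity n ^ (i + m)"
    using i by (intro root_unity_power_cong) (auto simp: cong_def)
  also have "of_int c * root_unity n ^ (i + m) = ((of_int c * root_unity n ^ m) \<cdot>\<^sub>v root_powers_vec n) $ i"
    using i by (simp add: root_powers_vec_def power_add mult_ac)
  finally show "(map_mat of_int (cyclic_shift_mat n m c) *\<^sub>v root_powers_vec n) $ i
      = ((of_int c * root_unity n ^ m) \<cdot>\<^sub>v root_powers_vec n) $ i" .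
qed (simp add: root_powers_vec_def cyclic_shift_mat_def)

lemma cyclotomic_int_eigenvector:
  assumes "cyclotomic_int n x"
  shows "\<exists>A \<in> carrier_mat n n. map_mat of_int A *\<^sub>v root_powers_vec n = x \<cdot>\<^sub>v root_powers_vec n"
  using assms
proof induction
  case (of_int c)
  show ?case
    using cyclic_shift_mat_root_powers[of n 0 c] by (intro bexI[of _ "cyclic_shift_mat n 0 c"]) auto
next
  case (root_power m)
  show ?case
    using cyclic_shift_mat_root_powers[of n m 1] by (intro bexI[of _ "cyclic_shift_mat n m 1"]) auto
next
  case (add x y)
  then obtain A B where A: "A \<in> carrier_mat n n" "map_mat of_int A *\<^sub>v root_powers_vec n = x \<cdot>\<^sub>v root_powers_vec n"
    and B: "B \<in> carrier_mat n n" "map_mat of_int B *\<^sub>v root_powers_vec n = y \<cdot>\<^sub>v root_powers_vec n"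
    by blast
  have "map_mat of_int (A + B) = map_mat of_int A + (map_mat of_int B :: complex mat)"
    using A B by (intro eq_matI) auto
  then have "map_mat of_int (A + B) *\<^sub>v root_powers_vec n = (x + y) \<cdot>\<^sub>v root_powers_vec n"
    using A B by (simp add: add_mult_distrib_mat_vec add_smult_distrib_vec)
  then show ?case
    using A B by (intro bexI[of _ "A + B"]) auto
next
  case (mult x y)
  then obtain A B where A: "A \<in> carrier_mat n n" "map_mat of_int A *\<^sub>v root_powers_vec n = x \<cdot>\<^sub>v root_powers_vec n"
    and B: "B \<in> carrier_mat n n" "map_mat of_int B *\<^sub>v root_powers_vec n = y \<cdot>\<^sub>v root_powers_vec n"
    by blast
  have "map_mat of_int (A * B) *\<^sub>v root_powers_vec n = map_mat of_int A *\<^sub>v (map_mat of_int B *\<^sub>v root_powers_vec n)"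
    using A B by (simp add: of_int_hom.mat_hom_mult assoc_mult_mat_vec)
  also have "\<dots> = (x * y) \<cdot>\<^sub>v root_powers_vec n"
    using A B by (simp add: mult_mat_vec smult_smult_assoc mult.commute)
  finally show ?case
    using A B by (intro bexI[of _ "A * B"]) auto
qed

lemma algebraic_int_eigenvalue_of_int_mat:
  fixes A :: "int mat" and x :: "'a :: field_char_0"
  assumes "A \<in> carrier_mat n n" and "eigenvalue (map_mat of_int A) x"
  shows "algebraic_int x"
proof -
  have "poly (char_poly (map_mat of_int A)) x = 0"
    using assms eigenvalue_root_char_poly[of "map_mat of_int A" n x] by simp
  moreover have "char_poly (map_mat of_int A :: 'a mat) = map_poly of_int (char_poly A)"
    by (rule of_int_hom.char_poly_hom[OF assms(1)])
  moreover have "lead_coeff (char_poly A) = 1"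
    using degree_monic_char_poly[OF assms(1)] by simp
  ultimately show ?thesis
    unfolding algebraic_int_altdef_ipoly by auto
qed

lemma cyclotomic_int_imp_algebraic_int:
  assumes "n > 0" and "cyclotomic_int n x"
  shows "algebraic_int x"
proof -
  obtain A where A: "A \<in> carrier_mat n n"
    and eigen: "map_mat of_int A *\<^sub>v root_powers_vec n = x \<cdot>\<^sub>v root_powers_vec n"
    using cyclotomic_int_eigenvector[OF assms(2)] by blast
  have "eigenvalue (map_mat of_int A) x"
    unfolding eigenvalue_def eigenvector_def
    using A eigen root_powers_vec_nonzero[OF assms(1)] by (intro exI[of _ "root_powers_vec n"]) auto
  then show ?thesis
    by (rule algebraic_int_eigenvalue_of_int_mat[OF A])
qed

lemma cyclotomic_int_dvd:
  assumes "n > 0" and "cyclotomic_int n x" and "x * of_int q = of_int m" and "q \<noteq> 0"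
  shows "q dvd m"
proof -
  have "x = of_int m / of_int q"
    using assms(3,4) by (simp add: field_simps)
  then have "x \<in> \<rat>"
    by simp
  then have "x \<in> \<int>"
    by (rule rational_algebraic_int_is_int[OF cyclotomic_int_imp_algebraic_int[OF assms(1,2)]])
  then obtain c where "x = of_int c"
    by (elim Ints_cases)
  then have "c * q = m"
    using assms(3) by (metis of_int_eq_iff of_int_mult)
  then show ?thesis
    by (metis dvd_triv_right)
qed

lemma binomial_power_prime:
  fixes x y :: "'a :: comm_ring_1"
  assumes "prime p"
  shows "(x + y) ^ p = x ^ p + y ^ p
    + of_nat p * (\<Sum>k\<in>{1..<p}. of_nat ((p choose k) div p) * x ^ k * y ^ (p - k))"
proof -
  have p: "p > 1"
    using assms prime_gt_1_nat by blast
  have "(x + y) ^ p = (\<Sum>k\<le>p. of_nat (p choose k) * x ^ k * y ^ (p - k))"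
    by (simp add: binomial_ring)
  also have "{..p} = insert 0 (insert p {1..<p})"
    using p by auto
  also have "(\<Sum>k\<in>insert 0 (insert p {1..<p}). of_nat (p choose k) * x ^ k * y ^ (p - k))
      = y ^ p + x ^ p + (\<Sum>k\<in>{1..<p}. of_nat (p choose k) * x ^ k * y ^ (p - k))"
    using p by (simp add: add.assoc)
  also have "(\<Sum>k\<in>{1..<p}. of_nat (p choose k) * x ^ k * y ^ (p - k))
      = of_nat p * (\<Sum>k\<in>{1..<p}. of_nat ((p choose k) div p) * x ^ k * y ^ (p - k))"
    unfolding sum_distrib_left
  proof (rule sum.cong)
    fix k assume "k \<in> {1..<p}"
    then have "p * ((p choose k) div p) = p choose k"
      using assms dvd_choose_prime[of k p] by simp
    then show "of_nat (p choose k) * x ^ k * y ^ (p - k)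
        = of_nat p * (of_nat ((p choose k) div p) * x ^ k * y ^ (p - k))"
      by (metis (no_types, lifting) mult.assoc of_nat_mult)
  qed simp
  finally show ?thesis
    by (simp add: add_ac)
qed

lemma cyclotomic_int_sum_power_prime:
  assumes "prime p" and "finite T" and "\<And>s. s \<in> T \<Longrightarrow> cyclotomic_int n (x s)"
  shows "\<exists>g. cyclotomic_int n g \<and> (\<Sum>s\<in>T. x s) ^ p = (\<Sum>s\<in>T. x s ^ p) + of_nat p * g"
  using assms(2,3)
proof (induction T rule: finite_induct)
  case empty
  have "(0 :: complex) ^ p = 0"
    using assms(1) prime_gt_0_nat by simp
  then show ?case
    using cyclotomic_int.of_int[of n 0] by (intro exI[of _ 0]) simp
next
  case (insert s T)
  then obtain g where g: "cyclotomic_int n g" "(\<Sum>s\<in>T. x s) ^ p = (\<Sum>s\<in>T. x s ^ p) + of_nat p * g"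
    by blast
  define h where "h = (\<Sum>k\<in>{1..<p}. of_nat ((p choose k) div p) * x s ^ k * (\<Sum>s\<in>T. x s) ^ (p - k))"
  have "cyclotomic_int n h"
    unfolding h_def using insert.prems
    by (intro cyclotomic_int_sum cyclotomic_int.mult cyclotomic_int_power cyclotomic_int_of_nat) auto
  moreover have "(\<Sum>s\<in>insert s T. x s) ^ p = (\<Sum>s\<in>insert s T. x s ^ p) + of_nat p * (g + h)"
    using insert.hyps g(2) binomial_power_prime[OF assms(1), of "x s" "\<Sum>s\<in>T. x s"]
    by (simp add: h_def algebra_simps)
  ultimately show ?case
    using g(1) by (blast intro: cyclotomic_int.add)
qed

lemma fermat_little_int:
  fixes a :: int
  assumes "prime p"
  shows "[a ^ p = a] (mod int p)"
proof -
  have nat_case: "[b ^ p = b] (mod p)" for b :: nat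
  proof (cases "p dvd b")
    case True
    then have "p dvd b ^ p"
      using assms by (meson dvd_power dvd_trans prime_gt_0_nat)
    then have "[b ^ p = 0] (mod p)"
      by (simp add: cong_0_iff)
    moreover have "[0 = b] (mod p)"
      by (rule cong_sym) (simp add: cong_0_iff True)
    ultimately show ?thesis
      by (rule cong_trans)
  next
    case False
    then have "[b * b ^ (p - 1) = b * 1] (mod p)"
      using assms fermat_theorem by (blast intro: cong_scalar_left)
    then show ?thesis
      using assms prime_gt_0_nat by (simp add: power_eq_if)
  qed
  define b where "b = nat (a mod int p)"
  have ab: "[a = int b] (mod int p)"
    using assms prime_gt_0_nat by (simp add: b_def cong_def)
  then have "[a ^ p = int b ^ p] (mod int p)"
    by (rule cong_pow)
  also have "[int b ^ p = int b] (mod int p)"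
    using nat_case[of b] by (simp add: cong_int_iff[symmetric])
  also have "[int b = a] (mod int p)"
    using ab by (rule cong_sym)
  finally show ?thesis .
qed

lemma valid_symbol_bounds:
  assumes "valid_symbol n S" and "s \<in> S"
  shows "0 < s \<and> s < n"
proof -
  have "s \<in> {1..n-1}"
    using assms unfolding valid_symbol_def by blast
  then show ?thesis
    by auto
qed

lemma valid_symbol_mirror:
  assumes "valid_symbol n S" and "s \<in> S"
  shows "n - s \<in> S"
proof -
  have s: "0 < s \<and> s < n"
    using valid_symbol_bounds[OF assms] .
  have "n - s \<in> S \<longleftrightarrow> n - s \<in> {1..n-1} \<and> n - (n - s) \<in> S"
    using assms(1) unfolding valid_symbol_def by blast
  then show ?thesis
    using s assms(2) by auto
qed

lemma mod_diff_involution: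
  fixes i k n :: nat
  assumes "i < n" and "k < n"
  shows "(i + n - (i + n - k) mod n) mod n = k"
proof -
  define r where "r = (i + n - k) mod n"
  have "r < n"
    using assms by (simp add: r_def)
  have "[(i + n - r) + r = k + (i + n - k)] (mod n)"
    using \<open>r < n\<close> assms by simp
  also have "[k + (i + n - k) = k + r] (mod n)"
    by (simp add: r_def cong_add_lcancel_nat)
  finally have "[i + n - r = k] (mod n)"
    by (simp add: cong_add_rcancel_nat)
  then show ?thesis
    using assms(2) by (simp add: r_def cong_def)
qed

lemma diff_mod_diff_cong:
  fixes i s n :: nat
  assumes "i < n" and "s < n"
  shows "[n - (i + n - s) mod n = s + (n - i)] (mod n)"
proof -
  define r where "r = (i + n - s) mod n"
  have "r < n"
    using assms by (simp add: r_def)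
  have "[(n - r) + r = 0] (mod n)"
    using \<open>r < n\<close> by (simp add: cong_0_iff)
  also have "[0 = (s + (n - i)) + (i + n - s)] (mod n)"
    using assms by (simp add: cong_def)
  also have "[(s + (n - i)) + (i + n - s) = (s + (n - i)) + r] (mod n)"
    by (simp add: r_def cong_add_lcancel_nat)
  finally show ?thesis
    by (simp add: r_def cong_add_rcancel_nat)
qed

lemma circ_adj_matrix_mult_vec:
  assumes "S \<subseteq> {..<n}" and "v \<in> carrier_vec n" and "i < n"
  shows "(circ_adj_matrix n S *\<^sub>v v) $ i = (\<Sum>s\<in>S. v $ ((i + n - s) mod n))"
proof -
  let ?r = "\<lambda>k. (i + n - k) mod n"
  have "(circ_adj_matrix n S *\<^sub>v v) $ i = (\<Sum>k<n. (if ?r k \<in> S then 1 else 0) * v $ k)"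
    using assms(2,3)
    by (simp add: circ_adj_matrix_def circ_adj_def mult_mat_vec_def scalar_prod_def atLeast0LessThan)
  also have "\<dots> = (\<Sum>s<n. (if s \<in> S then 1 else 0) * v $ ?r s)"
    by (rule sum.reindex_bij_witness[of _ ?r ?r]) (use assms(3) in \<open>auto simp: mod_diff_involution\<close>)
  also have "\<dots> = (\<Sum>s<n. if s \<in> S then v $ ?r s else 0)"
    by (intro sum.cong) auto
  also have "\<dots> = (\<Sum>s\<in>{s\<in>{..<n}. s \<in> S}. v $ ?r s)"
    by (rule sum.inter_filter[symmetric]) simp
  also have "\<dots> = (\<Sum>s\<in>S. v $ ?r s)"
    using assms(1) by (intro sum.cong) auto
  finally show ?thesis .
qed

lemma circ_adj_matrix_eigenvalue:
  assumes n: "n > 0" and S: "S \<subseteq> {..<n}"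
  shows "eigenvalue (circ_adj_matrix n S) (\<Sum>s\<in>S. root_unity n ^ (j * s))"
proof -
  define v where "v = vec n (\<lambda>k. root_unity n ^ (j * (n - k)))"
  have "(circ_adj_matrix n S *\<^sub>v v) $ i = (\<Sum>s\<in>S. root_unity n ^ (j * s)) * v $ i" if i: "i < n" for i
  proof -
    have entry: "v $ ((i + n - s) mod n) = root_unity n ^ (j * s) * v $ i" if "s \<in> S" for s
    proof -
      have "[j * (n - (i + n - s) mod n) = j * (s + (n - i))] (mod n)"
        using S i that by (intro cong_scalar_left diff_mod_diff_cong) auto
      then have "root_unity n ^ (j * (n - (i + n - s) mod n)) = root_unity n ^ (j * (s + (n - i)))"
        by (rule root_unity_power_cong[OF n])
      then have "root_unity n ^ (j * (n - (i + n - s) mod n)) = root_unity n ^ (j * s) * root_unity n ^ (j * (n - i))"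
        by (simp only: distrib_left power_add)
      then show ?thesis
        using i by (simp add: v_def)
    qed
    have "(circ_adj_matrix n S *\<^sub>v v) $ i = (\<Sum>s\<in>S. v $ ((i + n - s) mod n))"
      by (rule circ_adj_matrix_mult_vec[OF S _ i]) (simp add: v_def)
    also have "\<dots> = (\<Sum>s\<in>S. root_unity n ^ (j * s)) * v $ i"
      by (simp add: entry sum_distrib_right)
    finally show ?thesis .
  qed
  then have "circ_adj_matrix n S *\<^sub>v v = (\<Sum>s\<in>S. root_unity n ^ (j * s)) \<cdot>\<^sub>v v"
    by (intro eq_vecI) (auto simp: v_def circ_adj_matrix_def)
  moreover have "v \<noteq> 0\<^sub>v n"
  proof -
    have "v $ 0 = 1"
      using n by (simp add: v_def root_unity_power_eq_1_iff)
    then show ?thesis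
      using n by auto
  qed
  moreover have "v \<in> carrier_vec n" and "dim_row (circ_adj_matrix n S) = n"
    by (simp_all add: v_def circ_adj_matrix_def)
  ultimately show ?thesis
    unfolding eigenvalue_def eigenvector_def by metis
qed

lemma eigenvalue_sum_inversion:
  assumes "n > 0" and "finite S" and "k < n"
    and eigen: "\<And>j. (\<Sum>s\<in>S. root_unity n ^ (j * s)) = of_int (ev j)"
  shows "(\<Sum>j<n. of_int (ev (q * j)) * root_unity n ^ (j * (n - k)))
       = of_nat n * of_nat (card {s\<in>S. (q * s) mod n = k})"
proof -
  have "of_int (ev (q * j)) = (\<Sum>s\<in>S. root_unity n ^ (j * (q * s)))" for j
    by (simp flip: eigen add: mult_ac)
  then show ?thesis
    using root_unity_inversion[OF assms(1-3), of "\<lambda>s. q * s"] by simp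
qed

lemma eigenvalue_prime_dvd:
  assumes "n > 0" and "finite S" and q: "prime q"
    and eigen: "\<And>j. (\<Sum>s\<in>S. root_unity n ^ (j * s)) = of_int (ev j)"
  shows "int q dvd ev j - ev (q * j)"
proof -
  have "\<exists>g. cyclotomic_int n g \<and>
      (\<Sum>s\<in>S. root_unity n ^ (j * s)) ^ q = (\<Sum>s\<in>S. (root_unity n ^ (j * s)) ^ q) + of_nat q * g"
    by (rule cyclotomic_int_sum_power_prime[OF q assms(2)]) (rule cyclotomic_int.root_power)
  then obtain g where g: "cyclotomic_int n g"
    and frobenius: "(\<Sum>s\<in>S. root_unity n ^ (j * s)) ^ q = (\<Sum>s\<in>S. (root_unity n ^ (j * s)) ^ q) + of_nat q * g"
    by blast
  have "(\<Sum>s\<in>S. (root_unity n ^ (j * s)) ^ q) = (\<Sum>s\<in>S. root_unity n ^ ((q * j) * s))"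
    by (simp add: power_mult[symmetric] mult_ac)
  also have "\<dots> = of_int (ev (q * j))"
    by (rule eigen)
  finally have "of_int (ev j) ^ q = of_int (ev (q * j)) + of_nat q * g"
    using frobenius eigen[of j] by simp
  moreover obtain t where t: "ev j ^ q = ev j + int q * t"
    using cong_sym[OF fermat_little_int[OF q, of "ev j"]] unfolding cong_iff_lin by blast
  moreover have "of_int (ev j) ^ q = of_int (ev j) + of_nat q * (of_int t :: complex)"
    using arg_cong[OF t, of "of_int :: int \<Rightarrow> complex"]
    by (simp only: of_int_add of_int_mult of_int_power of_int_of_nat_eq)
  ultimately have "of_int (ev (q * j)) + of_nat q * g = of_int (ev j) + of_nat q * (of_int t :: complex)"
    by simp
  then have eq: "(g - of_int t) * of_int (int q) = of_int (ev j - ev (q * j))"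
    by (simp add: algebra_simps)
  have "cyclotomic_int n (g - of_int t)"
    using g by (intro cyclotomic_int_diff cyclotomic_int.of_int)
  then show ?thesis
    using eq by (rule cyclotomic_int_dvd[OF assms(1)]) (use q prime_gt_0_nat in auto)
qed

lemma coprime_mult_mod_eq_iff:
  fixes q s s' n :: nat
  assumes "coprime q n" and "s < n" and "s' < n"
  shows "(q * s') mod n = (q * s) mod n \<longleftrightarrow> s' = s"
proof -
  have "[q * s' = q * s] (mod n) \<longleftrightarrow> [s' = s] (mod n)"
    by (rule cong_mult_lcancel_nat[OF assms(1)])
  then show ?thesis
    using assms(2,3) by (simp add: cong_def)
qed

lemma prime_multiple_in_symbol:
  assumes n: "n > 0" and S: "S \<subseteq> {..<n}"
    and eigen: "\<And>j. (\<Sum>s\<in>S. root_unity n ^ (j * s)) = of_int (ev j)"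
    and q: "prime q" "\<not> q dvd n" and s: "s \<in> S"
  shows "(q * s) mod n \<in> S"
proof (rule ccontr)
  define k where "k = (q * s) mod n"
  assume "(q * s) mod n \<notin> S"
  then have none: "{s'\<in>S. s' mod n = k} = {}"
    using S by (auto simp: k_def)
  have "coprime q n"
    using q by (simp add: prime_imp_coprime)
  have one: "{s'\<in>S. (q * s') mod n = k} = {s}"
  proof (intro equalityI subsetI)
    fix x assume "x \<in> {s'\<in>S. (q * s') mod n = k}"
    then show "x \<in> {s}"
      using coprime_mult_mod_eq_iff[OF \<open>coprime q n\<close>, of s x] S s by (auto simp: k_def)
  qed (use s k_def in auto)
  have "k < n"
    using n by (simp add: k_def)
  have sums: "(\<Sum>j<n. of_int (ev j) * root_unity n ^ (j * (n - k))) = 0"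
    "(\<Sum>j<n. of_int (ev (q * j)) * root_unity n ^ (j * (n - k))) = of_nat n"
    using eigenvalue_sum_inversion[OF n finite_subset[OF S finite_lessThan] \<open>k < n\<close> eigen, of 1]
      eigenvalue_sum_inversion[OF n finite_subset[OF S finite_lessThan] \<open>k < n\<close> eigen, of q]
    by (simp_all add: none one)
  obtain c where c: "\<And>j. ev j - ev (q * j) = int q * c j"
    using eigenvalue_prime_dvd[OF n finite_subset[OF S finite_lessThan] q(1) eigen]
    unfolding dvd_def by metis
  define x where "x = (\<Sum>j<n. of_int (c j) * root_unity n ^ (j * (n - k)))"
  have "cyclotomic_int n x"
    unfolding x_def by (intro cyclotomic_int_sum cyclotomic_int.intros)
  have "x * of_int (int q) = of_int (- int n)"
  proof -
    have "x * of_int (int q) = (\<Sum>j<n. of_int (ev j - ev (q * j)) * root_unity n ^ (j * (n - k)))"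
      unfolding x_def c by (simp add: sum_distrib_left sum_distrib_right mult_ac)
    also have "\<dots> = of_int (- int n)"
      using sums by (simp add: left_diff_distrib sum_subtractf)
    finally show ?thesis .
  qed
  then have "int q dvd - int n"
    by (rule cyclotomic_int_dvd[OF n \<open>cyclotomic_int n x\<close>]) (use q(1) prime_gt_0_nat in auto)
  then show False
    using q(2) by simp
qed

lemma unit_multiple_in_symbol:
  assumes n: "n > 0" and S: "S \<subseteq> {..<n}"
    and eigen: "\<And>j. (\<Sum>s\<in>S. root_unity n ^ (j * s)) = of_int (ev j)"
    and s: "s \<in> S"
  shows "coprime u n \<Longrightarrow> (u * s) mod n \<in> S"
proof (induction u rule: prime_divisors_induct)
  case zero
  then show ?case
    using S s by auto
next
  case (unit u)
  then show ?case
    using S s by auto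
next
  case (factor p u)
  then have "(u * s) mod n \<in> S" and "\<not> p dvd n"
    using prime_imp_coprime[OF factor(1)] by (auto simp: coprime_absorb_left)
  then have "(p * ((u * s) mod n)) mod n \<in> S"
    using prime_multiple_in_symbol[OF n S eigen factor(1)] by blast
  then show ?case
    by (simp add: mod_mult_right_eq mult.assoc)
qed

lemma exists_coprime_cong:
  fixes v m n :: nat
  assumes "n > 0" and "coprime v m" and "m dvd n"
  shows "\<exists>u. coprime u n \<and> [u = v] (mod m)"
proof -
  define P where "P = {p \<in> prime_factors n. \<not> p dvd v}"
  define u where "u = v + m * \<Prod>P"
  have "finite P"
    by (simp add: P_def)
  have "\<not> p dvd u" if p: "prime p" "p dvd n" for p
  proof (cases "p dvd v")
    case True
    then have "\<not> p dvd m"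
      using assms(2) p(1) coprime_common_divisor not_prime_unit by blast
    moreover have "\<not> p dvd \<Prod>P"
      using True p(1) \<open>finite P\<close> by (auto simp: P_def prime_dvd_prod_iff dest: primes_dvd_imp_eq)
    ultimately show ?thesis
      using True p(1) by (simp add: u_def dvd_add_right_iff prime_dvd_mult_iff)
  next
    case False
    then have "p \<in> P"
      using p assms(1) by (simp add: P_def in_prime_factors_iff)
    then have "p dvd m * \<Prod>P"
      using dvd_prodI[OF \<open>finite P\<close>, of p "\<lambda>x. x"] by simp
    then show ?thesis
      using False by (simp add: u_def dvd_add_left_iff)
  qed
  have "coprime u n"
  proof (rule ccontr)
    assume "\<not> coprime u n"
    then obtain p where "prime p" and "p dvd gcd u n"
      using prime_factor_nat[of "gcd u n"] by (auto simp: coprime_iff_gcd_eq_1)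
    then show False
      using \<open>\<And>p. prime p \<Longrightarrow> p dvd n \<Longrightarrow> \<not> p dvd u\<close> by auto
  qed
  moreover have "[u = v] (mod m)"
    by (simp add: u_def cong_def)
  ultimately show ?thesis
    by blast
qed

lemma same_gcd_imp_unit_multiple:
  fixes s k n :: nat
  assumes "n > 0" and "gcd k n = gcd s n"
  shows "\<exists>u. coprime u n \<and> [u * s = k] (mod n)"
proof -
  define d where "d = gcd s n"
  have "d dvd s" and "d dvd k" and "d dvd n"
    using assms(2) by (simp_all add: d_def) (metis gcd_dvd1)
  then obtain s' k' m where s': "s = d * s'" and k': "k = d * k'" and m: "n = d * m"
    by (elim dvdE) blast
  have "d > 0"
    using assms(1) by (simp add: d_def)
  have "d * gcd s' m = gcd s n" and "d * gcd k' m = gcd k n"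
    unfolding s' k' m by (simp_all add: gcd_mult_distrib_nat)
  then have "d * gcd s' m = d * 1" and "d * gcd k' m = d * 1"
    using assms(2) by (simp_all add: d_def)
  then have "coprime s' m" and "coprime k' m"
    using \<open>d > 0\<close> by (simp_all add: coprime_iff_gcd_eq_1)
  obtain x where x: "[s' * x = 1] (mod m)"
    using cong_solve_coprime_nat[OF \<open>coprime s' m\<close>] by auto
  then have "coprime x m"
    using cong_imp_coprime[OF cong_sym[OF x]] by simp
  then obtain u where u: "coprime u n" "[u = x * k'] (mod m)"
    using exists_coprime_cong[OF assms(1), of "x * k'" m] \<open>coprime k' m\<close> m by auto
  have "[u * s' = (s' * x) * k'] (mod m)"
    using cong_scalar_right[OF u(2), of s'] by (simp add: mult_ac)
  also have "[(s' * x) * k' = 1 * k'] (mod m)"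
    using x by (rule cong_scalar_right)
  finally have "[d * (u * s') = d * k'] (mod n)"
    unfolding m by (simp add: cong_cmult_leftI)
  then show ?thesis
    using u(1) by (auto simp: s' k' mult_ac)
qed

lemma integral_circulant_Gn_subset:
  assumes "n \<ge> 1" and "valid_symbol n S" and "integral_circulant n S" and "s \<in> S"
  shows "Gn n (gcd s n) \<subseteq> S"
proof
  have n: "n > 0" and S: "S \<subseteq> {..<n}"
    using assms(1) valid_symbol_bounds[OF assms(2)] by auto
  have "(\<Sum>s\<in>S. root_unity n ^ (j * s)) \<in> \<int>" for j
    using assms(3) circ_adj_matrix_eigenvalue[OF n S, of j] unfolding integral_circulant_def by blast
  then have "\<forall>j. \<exists>l. (\<Sum>s\<in>S. root_unity n ^ (j * s)) = of_int l"
    by (blast elim: Ints_cases)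
  then obtain ev where eigen: "\<And>j. (\<Sum>s\<in>S. root_unity n ^ (j * s)) = of_int (ev j)"
    by metis
  fix k assume "k \<in> Gn n (gcd s n)"
  then have "k < n" and "gcd k n = gcd s n"
    by (auto simp: Gn_def)
  moreover obtain u where "coprime u n" and "[u * s = k] (mod n)"
    using same_gcd_imp_unit_multiple[OF n \<open>gcd k n = gcd s n\<close>] by blast
  ultimately show "k \<in> S"
    using unit_multiple_in_symbol[OF n S eigen assms(4), of u] by (simp add: cong_def)
qed

lemma pow2_times_odd_exists:
  fixes x :: nat
  assumes "x \<noteq> 0"
  shows "\<exists>r w. odd w \<and> x = 2 ^ r * w"
proof -
  obtain w where "x = 2 ^ multiplicity 2 x * w" and "\<not> 2 dvd w"
    using multiplicity_decompose'[OF assms, of 2] by auto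
  then show ?thesis
    by blast
qed

lemma pow2_times_odd_unique:
  fixes a b :: nat
  assumes "2 ^ r * a = 2 ^ t * b" and "odd a" and "odd b"
  shows "r = t"
  using multiplicity_decomposeI[of "2 ^ r * a" 2 r a] multiplicity_decomposeI[of "2 ^ t * b" 2 t b] assms
  by simp

lemma odd_div_power2_cong:
  fixes a b :: nat
  assumes "[a = b] (mod 2 ^ Suc t)"
  shows "odd (a div 2 ^ t) \<longleftrightarrow> odd (b div 2 ^ t)"
proof -
  have key: "odd (x div 2 ^ t) \<longleftrightarrow> odd (take_bit (Suc t) x div 2 ^ t)" for x :: nat
    by (metis bit_iff_odd bit_take_bit_iff lessI)
  have "take_bit (Suc t) a = take_bit (Suc t) b"
    using assms by (simp add: cong_def take_bit_eq_mod)
  then show ?thesis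
    using key[of a] key[of b] by simp
qed

definition uniform_2adic_valuation :: "nat \<Rightarrow> nat set \<Rightarrow> nat \<Rightarrow> bool" where
  "uniform_2adic_valuation n S t \<longleftrightarrow> 2 ^ Suc t dvd n \<and> (\<forall>s\<in>S. \<exists>w. odd w \<and> s = 2 ^ t * w)"

lemma circ_bipartite_if_uniform_2adic_valuation:
  assumes "uniform_2adic_valuation n S t"
  shows "circ_bipartite n S"
  unfolding circ_bipartite_def
proof (intro exI[of _ "\<lambda>i. odd (i div 2 ^ t)"] allI impI)
  fix i j assume "i < n" and "j < n" and "circ_adj n S i j"
  then obtain w where "odd w" and s: "(i + n - j) mod n = 2 ^ t * w"
    using assms by (auto simp: circ_adj_def uniform_2adic_valuation_def)
  obtain c where n: "n = 2 ^ Suc t * c"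
    using assms by (auto simp: uniform_2adic_valuation_def)
  have "[i + n - j = 2 ^ t * w] (mod 2 ^ Suc t)"
    by (rule cong_dvd_modulus_nat[of _ _ n]) (simp_all add: n flip: s)
  also have "[2 ^ t * w = 2 ^ t * 1] (mod 2 ^ Suc t)"
  proof -
    have "[w = 1] (mod 2)"
      using \<open>odd w\<close> by (simp add: cong_def odd_iff_mod_2_eq_one)
    then show ?thesis
      using cong_cmult_leftI[of w 1 2 "2 ^ t"] by (simp add: mult.commute)
  qed
  finally have "[(i + n - j) + j = 2 ^ t + j] (mod 2 ^ Suc t)"
    by (simp add: cong_add_rcancel_nat mult.commute)
  then have "[i = j + 2 ^ t] (mod 2 ^ Suc t)"
    using \<open>j < n\<close> by (simp add: n cong_def add.commute)
  then have "odd (i div 2 ^ t) \<longleftrightarrow> odd (j div 2 ^ t + 1)"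
    by (simp add: odd_div_power2_cong)
  then show "odd (i div 2 ^ t) \<noteq> odd (j div 2 ^ t)"
    by simp
qed

lemma mod_add_diff_mod:
  fixes x s n :: nat
  assumes "s < n"
  shows "((x + s) mod n + n - x mod n) mod n = s"
proof -
  have "x mod n < n"
    using assms by simp
  then have "[((x + s) mod n + n - x mod n) + x mod n = s + x mod n] (mod n)"
    by (simp add: cong_def mod_add_left_eq mod_add_right_eq add.commute)
  then have "[(x + s) mod n + n - x mod n = s] (mod n)"
    by (simp only: cong_add_rcancel_nat)
  then show ?thesis
    using assms by (simp add: cong_def)
qed

lemma circ_bipartite_closed_walk_even:
  assumes "valid_symbol n S" and "circ_bipartite n S"
    and "s1 \<in> S" and "s2 \<in> S" and "a * s1 + b * s2 = n * z"
  shows "even (a + b)"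
proof -
  have S: "s < n" if "s \<in> S" for s
    using valid_symbol_bounds[OF assms(1) that] by simp
  obtain c :: "nat \<Rightarrow> bool" where c: "\<And>i j. i < n \<Longrightarrow> j < n \<Longrightarrow> circ_adj n S i j \<Longrightarrow> c i \<noteq> c j"
    using assms(2) unfolding circ_bipartite_def by blast
  define C where "C x = c (x mod n)" for x
  have step: "C (x + s) \<longleftrightarrow> \<not> C x" if "s \<in> S" for x s
  proof -
    have "circ_adj n S ((x + s) mod n) (x mod n)"
      using S[OF that] that by (simp add: circ_adj_def mod_add_diff_mod)
    then have "c ((x + s) mod n) \<noteq> c (x mod n)"
      using S[OF that] by (intro c) simp_all
    then show ?thesis
      unfolding C_def by blast
  qed
  have walk: "C (x + m * s) \<longleftrightarrow> (C x \<longleftrightarrow> even m)" if "s \<in> S" for x m s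
  proof (induction m)
    case (Suc m)
    have "C (x + Suc m * s) \<longleftrightarrow> \<not> C (x + m * s)"
      using step[OF that, of "x + m * s"] by (simp add: algebra_simps)
    then show ?case
      using Suc.IH by simp
  qed simp
  have "C (a * s1 + b * s2) = C 0"
    by (simp add: assms(5) C_def)
  then have "C 0 \<longleftrightarrow> ((C 0 \<longleftrightarrow> even a) \<longleftrightarrow> even b)"
    using walk[OF assms(4), of "a * s1" b] walk[OF assms(3), of 0 a] by simp
  then show ?thesis
    by auto
qed

lemma circ_bipartite_2adic_valuation_eq:
  assumes "valid_symbol n S" and "circ_bipartite n S" and "s1 \<in> S" and "s2 \<in> S"
    and "s1 = 2 ^ r1 * w1" and "s2 = 2 ^ r2 * w2" and "odd w1" and "odd w2"
  shows "r1 = r2"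
proof -
  have smaller: False
    if "s1 \<in> S" "s2 \<in> S" "s1 = 2 ^ r1 * w1" "s2 = 2 ^ r2 * w2" "odd w1" "r1 < r2"
    for s1 s2 r1 r2 w1 w2
  proof -
    have "2 ^ (r2 - r1) * w2 * s1 = w1 * s2"
      using that by (simp add: mult_ac flip: power_add)
    then have "2 ^ (r2 - r1) * w2 * s1 + w1 * (n - s2) = n * w1"
      using valid_symbol_bounds[OF assms(1) that(2)] by (simp add: diff_mult_distrib2 mult.commute)
    then have "even (2 ^ (r2 - r1) * w2 + w1)"
      by (rule circ_bipartite_closed_walk_even[OF assms(1,2) that(1) valid_symbol_mirror[OF assms(1) that(2)]])
    then show False
      using that(5,6) by simp
  qed
  show ?thesis
    using smaller[OF assms(3,4,5,6,7)] smaller[OF assms(4,3,6,5,8)]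
    by (cases r1 r2 rule: linorder_cases) auto
qed

lemma uniform_2adic_valuation_if_circ_bipartite:
  assumes "valid_symbol n S" and "S \<noteq> {}" and "circ_bipartite n S"
  shows "\<exists>t. uniform_2adic_valuation n S t"
proof -
  note S = valid_symbol_bounds[OF assms(1)]
  obtain s0 where "s0 \<in> S"
    using assms(2) by blast
  then obtain t u where "odd u" and s0: "s0 = 2 ^ t * u"
    using pow2_times_odd_exists S by blast
  have "n \<noteq> 0"
    using S[OF \<open>s0 \<in> S\<close>] by simp
  then obtain e m where "odd m" and n: "n = 2 ^ e * m"
    using pow2_times_odd_exists by blast
  have "t < e"
  proof (rule ccontr)
    assume "\<not> t < e"
    then have "m * s0 + 0 * s0 = n * (2 ^ (t - e) * u)"
      by (simp add: n s0 mult_ac flip: power_add)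
    then have "even (m + 0)"
      by (rule circ_bipartite_closed_walk_even[OF assms(1,3) \<open>s0 \<in> S\<close> \<open>s0 \<in> S\<close>])
    then show False
      using \<open>odd m\<close> by simp
  qed
  then have "2 ^ Suc t dvd (2 :: nat) ^ e"
    by (intro le_imp_power_dvd) simp
  then have "2 ^ Suc t dvd n"
    unfolding n by (rule dvd_mult2)
  moreover have "\<exists>w. odd w \<and> s = 2 ^ t * w" if s: "s \<in> S" for s
  proof -
    obtain r w where s_eq: "s = 2 ^ r * w" and "odd w"
      using pow2_times_odd_exists S[OF s] by blast
    then have "r = t"
      by (rule circ_bipartite_2adic_valuation_eq[OF assms(1,3) s \<open>s0 \<in> S\<close> _ s0 _ \<open>odd u\<close>])
    then show ?thesis
      using s_eq \<open>odd w\<close> by blast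
  qed
  ultimately show ?thesis
    unfolding uniform_2adic_valuation_def by blast
qed

lemma Gn_union_odd_ratio:
  assumes "F \<subseteq> {f. f dvd n}" and "s \<in> (\<Union>f\<in>F. Gn n (n div f))"
    and "\<forall>f\<in>F. \<exists>k :: int. odd k \<and> 2 * l0 = k * int f"
  shows "\<exists>w. odd w \<and> s * nat \<bar>2 * l0\<bar> = n * w"
proof -
  obtain f k where "f \<in> F" and s: "s \<in> Gn n (n div f)" and "odd k" and k: "2 * l0 = k * int f"
    using assms(2,3) by blast
  define d where "d = n div f"
  have "0 < s" and "gcd s n = d"
    using s by (auto simp: Gn_def d_def)
  then have "d > 0"
    by auto
  have n: "n = d * f"
    using assms(1) \<open>f \<in> F\<close> by (auto simp: d_def)
  obtain u where s_eq: "s = d * u"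
    using \<open>gcd s n = d\<close> by (metis gcd_dvd1 dvdE)
  have "d * gcd u f = d * 1"
    using \<open>gcd s n = d\<close> by (simp add: s_eq n gcd_mult_distrib_nat)
  then have "coprime u f"
    using \<open>d > 0\<close> by (simp add: coprime_iff_gcd_eq_1)
  have "even (k * int f)"
    by (simp flip: k)
  then have "even f"
    using \<open>odd k\<close> by simp
  then have "odd u"
    using \<open>coprime u f\<close> by (auto dest: coprime_common_divisor)
  have "nat \<bar>2 * l0\<bar> = nat \<bar>k\<bar> * f"
    by (simp add: k abs_mult nat_mult_distrib)
  then have "s * nat \<bar>2 * l0\<bar> = n * (u * nat \<bar>k\<bar>)"
    by (simp add: s_eq n mult_ac)
  moreover have "odd (u * nat \<bar>k\<bar>)"
    using \<open>odd u\<close> \<open>odd k\<close> by (simp add: even_nat_iff)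
  ultimately show ?thesis
    by blast
qed

lemma odd_ratio_same_2adic_valuation:
  fixes s s' L n :: nat
  assumes "s * L = n * w" and "s' * L = n * w'" and "odd w" and "odd w'" and "L \<noteq> 0"
    and "s = 2 ^ r * v" and "s' = 2 ^ r' * v'" and "odd v" and "odd v'"
  shows "r = r'"
proof -
  have "s * w' * L = (s * L) * w'"
    by (simp add: mult_ac)
  also have "\<dots> = (n * w) * w'"
    by (simp only: assms(1))
  also have "\<dots> = (n * w') * w"
    by (simp add: mult_ac)
  also have "\<dots> = (s' * L) * w"
    by (simp only: assms(2))
  also have "\<dots> = s' * w * L"
    by (simp add: mult_ac)
  finally have "s * w' = s' * w"
    using assms(5) by simp
  then have "2 ^ r * (v * w') = 2 ^ r' * (v' * w)"
    by (simp add: assms(6,7) mult_ac)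
  then show ?thesis
    by (rule pow2_times_odd_unique) (use assms(3,4,8,9) in simp_all)
qed

lemma uniform_2adic_valuation_if_odd_ratio:
  fixes L :: nat
  assumes "even L" and "S \<noteq> {}" and "n > 0"
    and ratio: "\<And>s. s \<in> S \<Longrightarrow> \<exists>w. odd w \<and> s * L = n * w"
  shows "\<exists>t. uniform_2adic_valuation n S t"
proof -
  have nonzero: "s \<noteq> 0 \<and> L \<noteq> 0" if s: "s \<in> S" for s
  proof -
    obtain w where "odd w" and "s * L = n * w"
      using ratio[OF s] by blast
    moreover have "n * w \<noteq> 0"
      using assms(3) odd_pos[OF \<open>odd w\<close>] by simp
    ultimately have "s * L \<noteq> 0"
      by simp
    then show ?thesis
      by simp
  qed
  obtain s0 w0 where "s0 \<in> S" and "odd w0" and s0: "s0 * L = n * w0"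
    using assms(2) ratio by blast
  then obtain t u where "odd u" and s0_eq: "s0 = 2 ^ t * u"
    using pow2_times_odd_exists nonzero by blast
  have "2 ^ Suc t dvd n * w0"
    using assms(1) by (auto simp: s0_eq mult_ac simp flip: s0 elim!: evenE)
  moreover have "coprime (2 ^ Suc t) w0"
    using \<open>odd w0\<close> by simp
  ultimately have "2 ^ Suc t dvd n"
    by (simp add: coprime_dvd_mult_left_iff)
  moreover have "\<exists>w. odd w \<and> s = 2 ^ t * w" if s: "s \<in> S" for s
  proof -
    obtain w where "odd w" and "s * L = n * w"
      using ratio[OF s] by blast
    obtain r v where "odd v" and s_eq: "s = 2 ^ r * v"
      using pow2_times_odd_exists nonzero[OF s] by blast
    have "r = t"
      using odd_ratio_same_2adic_valuation[OF \<open>s * L = n * w\<close> s0 \<open>odd w\<close> \<open>odd w0\<close> _ s_eq s0_eq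
          \<open>odd v\<close> \<open>odd u\<close>] nonzero[OF s] by blast
    then show ?thesis
      using \<open>odd v\<close> s_eq by blast
  qed
  ultimately show ?thesis
    unfolding uniform_2adic_valuation_def by blast
qed

lemma uniform_2adic_valuation_if_Gn_union:
  assumes "n > 0" and "S \<noteq> {}" and "F \<subseteq> {f. f dvd n}" and "S = (\<Union>f\<in>F. Gn n (n div f))"
    and "\<forall>f\<in>F. \<exists>k :: int. odd k \<and> 2 * l0 = k * int f"
  shows "\<exists>t. uniform_2adic_valuation n S t"
proof (rule uniform_2adic_valuation_if_odd_ratio[OF _ assms(2,1)])
  show "even (nat \<bar>2 * l0\<bar>)"
    by (simp add: abs_mult nat_mult_distrib)
  show "\<exists>w. odd w \<and> s * nat \<bar>2 * l0\<bar> = n * w" if "s \<in> S" for s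
    using Gn_union_odd_ratio[OF assms(3) _ assms(5)] that assms(4) by blast
qed

lemma Gn_gcd_closed_eq_union:
  assumes "valid_symbol n S" and closed: "\<And>s. s \<in> S \<Longrightarrow> Gn n (gcd s n) \<subseteq> S"
  shows "S = (\<Union>f\<in>(\<lambda>s. n div gcd s n) ` S. Gn n (n div f))"
proof -
  have gcd_eq: "n div (n div gcd s n) = gcd s n" if "s \<in> S" for s
    using valid_symbol_bounds[OF assms(1) that] by (simp add: div_div_eq_right)
  have "s \<in> Gn n (gcd s n)" if "s \<in> S" for s
    using valid_symbol_bounds[OF assms(1) that] by (auto simp: Gn_def)
  then show ?thesis
    using closed gcd_eq by auto
qed

lemma Gn_union_if_uniform_2adic_valuation:
  assumes "valid_symbol n S" and "\<And>s. s \<in> S \<Longrightarrow> Gn n (gcd s n) \<subseteq> S"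
    and "uniform_2adic_valuation n S t"
  shows "even n \<and>
    (\<exists>F. F \<subseteq> {f. f dvd n} \<and> S = (\<Union>f\<in>F. Gn n (n div f)) \<and>
      (\<exists>l0 :: int. \<forall>f\<in>F. \<exists>k :: int. odd k \<and> 2 * l0 = k * int f))"
proof -
  obtain m where n: "n = 2 ^ t * (2 * m)"
    using assms(3) by (auto simp: uniform_2adic_valuation_def mult_ac elim!: dvdE)
  define F where "F = (\<lambda>s. n div gcd s n) ` S"
  have "F \<subseteq> {f. f dvd n}"
    using valid_symbol_bounds[OF assms(1)] by (auto simp: F_def div_dvd_iff_mult)
  moreover have "S = (\<Union>f\<in>F. Gn n (n div f))"
    unfolding F_def by (rule Gn_gcd_closed_eq_union[OF assms(1,2)])
  moreover have "\<forall>f\<in>F. \<exists>k :: int. odd k \<and> 2 * int m = k * int f"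
  proof
    fix f assume "f \<in> F"
    then obtain s where "s \<in> S" and f: "f = n div gcd s n"
      unfolding F_def by blast
    obtain w where "odd w" and s: "s = 2 ^ t * w"
      using assms(3) \<open>s \<in> S\<close> by (auto simp: uniform_2adic_valuation_def)
    define h where "h = gcd w (2 * m)"
    have "odd h"
      using \<open>odd w\<close> by (metis h_def gcd_dvd1 dvd_trans)
    have "gcd s n = 2 ^ t * h"
      by (simp add: s n h_def gcd_mult_distrib_nat)
    then have "h * f = 2 * m"
      using \<open>odd h\<close> by (simp add: f n h_def)
    then have "2 * int m = int h * int f"
      by (metis of_nat_mult of_nat_numeral)
    then show "\<exists>k :: int. odd k \<and> 2 * int m = k * int f"
      using \<open>odd h\<close> by (intro exI[of _ "int h"]) simp
  qed
  moreover have "even n"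
    by (simp add: n)
  ultimately show ?thesis
    by blast
qed

theorem theorem3:
  fixes n :: nat and S :: "nat set"
  assumes "n \<ge> 1"
    and "valid_symbol n S"
    and "S \<noteq> {}"
    and "integral_circulant n S"
  shows "circ_bipartite n S \<longleftrightarrow>
           (even n \<and>
            (\<exists>F. F \<subseteq> {f. f dvd n} \<and> S = (\<Union>f\<in>F. Gn n (n div f)) \<and>
                 (\<exists>l0 :: int. \<forall>f\<in>F. \<exists>k :: int. odd k \<and> 2 * l0 = k * int f)))"
proof -
  note closed = integral_circulant_Gn_subset[OF assms(1,2,4)]
  have "n > 0"
    using assms(1) by simp
  show ?thesis
    using uniform_2adic_valuation_if_circ_bipartite[OF assms(2,3)]
      Gn_union_if_uniform_2adic_valuation[OF assms(2) closed]
      uniform_2adic_valuation_if_Gn_union[OF \<open>n > 0\<close> assms(3)]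
      circ_bipartite_if_uniform_2adic_valuation
    by metis
qed

end
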